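(* Assume $q \in U_0$ and, for each $i\in\{1,2\}$, $q\bmod n_i$ is a quadratic residue modulo $n_i$. Let $\omega_{(0,0,0)}$ denote the minimum odd-like weight of the cyclic code over $\mathrm{GF}(q)$ of length $n$ with generator polynomial $u_0(x)d_0^{(n_1)}(x)d_0^{(n_2)}(x)$. For $j\in\{1,2\}$ let $\omega_1^{(n/n_j)}$ denote the minimum odd-like weight of the cyclic code of length $n$ over $\mathrm{GF}(q)$ with generator polynomial $(x^n-1)/\big((x-1)d_1^{(n_j)}(x)\big)$. Then $$\omega_{(0,0,0)} \ge \sqrt{\max\big(\omega_1^{(n/n_1)},\ \omega_1^{(n/n_2)}\big)}.$$
   Context: Let $n_1,n_2$ be distinct odd primes, $n=n_1n_2$, and let $q$ be a prime power with $\gcd(q,n)=1$. Let $d=\gcd(n_1-1,n_2-1)$ and $e=(n_1-1)(n_2-1)/d$. Let $g_1,g_2$ be primitive roots modulo $n_1,n_2$ respectively, let $g$ be the integer modulo $n$ with $g\equiv g_1 \pmod{n_1}$, $g\equiv g_2\pmod{n_2}$, and let $\nu$ be the integer modulo $n$ with $\nu\equiv g\pmod{n_1}$, $\nu\equiv 1\pmod{n_2}$. It is known that every element of $\mathbb{Z}_n^*$ can be written uniquely as $g^s\nu^i$ with $0\le s\le e-1$, $0\le i\le d-1$. Define $U_0=\{g^s\nu^i: 0\le s\le e-1,\ 0\le i \le d-1,\ i \text{ even}\}$ and $U_1=\{g^s\nu^i: i \text{ odd}\}$ (same ranges). For $j\in\{1,2\}$ let $D_0^{(n_j)}$, $D_1^{(n_j)}$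 be the sets of quadratic residues and nonresidues modulo $n_j$. Let $N=\mathrm{ord}_n(q)$ and $\theta$ a primitive $n$-th root of unity in $\mathrm{GF}(q^N)$. Define $d_i^{(n_1)}(x)=\prod_{j\in D_i^{(n_1)}}(x-\theta^{n_2 j})$, $d_i^{(n_2)}(x)=\prod_{j\in D_i^{(n_2)}}(x-\theta^{n_1 j})$, and $u_j(x)=\prod_{i\in U_j}(x-\theta^i)$; under the hypotheses these lie in $\mathrm{GF}(q)[x]$. Cyclic codes of length $n$ are identified with ideals of $\mathrm{GF}(q)[x]/(x^n-1)$. A codeword $(c_0,\dots,c_{n-1})$ is odd-like if $\sum_i c_i\neq 0$; the minimum odd-like weight of a code is the minimum Hamming weight of its odd-like codewords. *)

theory Defs
  imports "HOL-Analysis.Analysis" "HOL-Number_Theory.Number_Theory"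
    "HOL-Computational_Algebra.Polynomial"
begin

text \<open>Hamming weight of a word (c_0,...,c_{n-1}), represented as a polynomial of degree < n.\<close>
definition hamming_weight :: "'a::zero poly \<Rightarrow> nat" where
  "hamming_weight c = card {i. Polynomial.coeff c i \<noteq> 0}"

definition odd_like :: "nat \<Rightarrow> 'a::comm_ring_1 poly \<Rightarrow> bool" where
  "odd_like n c \<longleftrightarrow> (\<Sum>i<n. Polynomial.coeff c i) \<noteq> 0"

text \<open>Cyclic code of length n with generator polynomial g: the ideal generated by g
  in F[x]/(x^n - 1), codewords represented by their reduced representatives (degree < n).\<close>
definition cyclic_code :: "nat \<Rightarrow> 'a::field poly \<Rightarrow> 'a poly set" where
  "cyclic_code n g = {(g * a) mod (Polynomial.monom 1 n - 1) | a. True}"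

definition min_odd_like_weight :: "nat \<Rightarrow> 'a::field poly set \<Rightarrow> nat" where
  "min_odd_like_weight n C = Min (hamming_weight ` {c \<in> C. odd_like n c})"

definition QR_set :: "nat \<Rightarrow> nat set" where
  "QR_set p = {j. 0 < j \<and> j < p \<and> QuadRes (int p) (int j)}"

definition QNR_set :: "nat \<Rightarrow> nat set" where
  "QNR_set p = {j. 0 < j \<and> j < p \<and> \<not> QuadRes (int p) (int j)}"

text \<open>The sets U_0, U_1 (elements g^s nu^i reduced mod n).\<close>
definition U_set :: "nat \<Rightarrow> nat \<Rightarrow> nat \<Rightarrow> nat \<Rightarrow> nat \<Rightarrow> nat \<Rightarrow> nat set" where
  "U_set r n e d g \<nu> = {(g ^ s * \<nu> ^ i) mod n | s i. s < e \<and> i < d \<and> i mod 2 = r}"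

definition root_poly :: "'b::comm_ring_1 \<Rightarrow> nat set \<Rightarrow> 'b poly" where
  "root_poly t S = (\<Prod>j\<in>S. [:- (t ^ j), 1:])"

end

theory Submission
  imports Defs
begin

text \<open>
  Let \<open>c\<close> be an odd-like word of minimum weight \<open>w\<close> in the code generated by
  \<open>G000 = u_0 d_0^{(n_1)} d_0^{(n_2)}\<close>, and let \<open>\<mu>\<close> be a unit modulo \<open>n\<close>.  The word
  \<open>c(x) c(x^\<mu>) mod (x^n - 1)\<close> has weight at most \<open>w\<^sup>2\<close>, and it is odd-like because its
  coordinate sum is the square of that of \<open>c\<close>.  The code generated by
  \<open>(x^n - 1) / ((x - 1) d_1^{(n_j)}(x))\<close> consists of the words vanishing at every \<open>\<theta>^k\<close> with
  \<open>k \<noteq> 0\<close> outside \<open>(n / n_j) D_1^{(n_j)}\<close>.  Choosing \<open>\<mu> = \<nu>\<close> (for \<open>j = 2\<close>), resp. \<open>\<mu>\<close> equal to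
  \<open>g_2\<close> modulo \<open>n_2\<close> and \<open>1\<close> modulo \<open>n_1\<close> (for \<open>j = 1\<close>), every such \<open>k\<close> has \<open>k\<close> or \<open>\<mu> k\<close> in the
  defining set \<open>U_0 \<union> n_2 D_0^{(n_1)} \<union> n_1 D_0^{(n_2)}\<close> of \<open>G000\<close>, so \<open>c(x) c(x^\<mu>)\<close> vanishes
  there and lies in the code.  Hence both minimum odd-like weights are at most \<open>w\<^sup>2\<close>.

  The hypotheses on \<open>q\<close> only serve
  in the paper to show that the generator polynomials have coefficients in \<open>GF(q)\<close>; here
  this is part of the hypotheses (through the embedding \<open>\<phi>\<close>).
\<close>

text \<open>HOL-Algebra (imported via Number_Theory) also has constants named coeff and monom.\<close>
hide_const (open) up_ring.coeff up_ring.monom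


section \<open>Field embeddings and descent of divisibility\<close>

text \<open>A ring homomorphism \<open>\<phi>\<close> from the field of coefficients \<open>GF(q)\<close> into the extension field
  \<open>GF(q^N)\<close> in which the roots of unity live.\<close>
locale field_embedding =
  fixes \<phi> :: "'a::field \<Rightarrow> 'b::field"
  assumes embed_add: "\<And>x y. \<phi> (x + y) = \<phi> x + \<phi> y"
    and embed_mult: "\<And>x y. \<phi> (x * y) = \<phi> x * \<phi> y"
    and embed_one: "\<phi> 1 = 1"
begin

lemma embed_zero [simp]: "\<phi> 0 = 0"
  using embed_add[of 0 0] by (metis add_cancel_right_right)

lemma embed_diff: "\<phi> (x - y) = \<phi> x - \<phi> y"
  using embed_add[of "x - y" y] by (simp add: eq_diff_eq)

lemma embed_sum: "\<phi> (sum f A) = (\<Sum>x\<in>A. \<phi> (f x))"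
  by (induction A rule: infinite_finite_induct) (auto simp: embed_add)

lemma embed_eq_0_iff [simp]: "\<phi> x = 0 \<longleftrightarrow> x = 0"
proof
  assume "\<phi> x = 0"
  show "x = 0"
  proof (rule ccontr)
    assume "x \<noteq> 0"
    hence "\<phi> (x * inverse x) = 1" using embed_one by simp
    thus False using \<open>\<phi> x = 0\<close> by (simp add: embed_mult)
  qed
qed simp

lemma coeff_embed_poly [simp]: "coeff (map_poly \<phi> p) i = \<phi> (coeff p i)"
  by (simp add: coeff_map_poly)

lemma embed_poly_add: "map_poly \<phi> (p + q) = map_poly \<phi> p + map_poly \<phi> q"
  by (rule poly_eqI) (simp add: embed_add)

lemma embed_poly_diff: "map_poly \<phi> (p - q) = map_poly \<phi> p - map_poly \<phi> q"
  by (rule poly_eqI) (simp add: embed_diff)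

lemma embed_poly_mult: "map_poly \<phi> (p * q) = map_poly \<phi> p * map_poly \<phi> q"
  by (rule poly_eqI) (simp add: coeff_mult embed_sum embed_mult)

lemma embed_poly_sum: "map_poly \<phi> (sum f A) = (\<Sum>x\<in>A. map_poly \<phi> (f x))"
  by (induction A rule: infinite_finite_induct) (auto simp: embed_poly_add)

lemma degree_embed_poly: "degree (map_poly \<phi> p) = degree p"
  by (rule degree_map_poly) simp

lemma embed_poly_eq_0_iff: "map_poly \<phi> p = 0 \<longleftrightarrow> p = 0"
  by (metis leading_coeff_0_iff coeff_embed_poly degree_embed_poly embed_eq_0_iff)

lemma poly_embed_poly: "poly (map_poly \<phi> p) (\<phi> x) = \<phi> (poly p x)"
  by (induction p) (auto simp: map_poly_pCons embed_add embed_mult)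

text \<open>Divisibility over the extension field descends to the base field: the remainder of
  the division over the base field maps to a multiple of \<open>h\<close> of smaller degree.\<close>
lemma dvd_of_embed_poly_dvd:
  assumes "map_poly \<phi> h dvd map_poly \<phi> p"
  shows "h dvd p"
proof (cases "h = 0")
  case True
  then show ?thesis using assms by (simp add: embed_poly_eq_0_iff)
next
  case False
  define r where "r = p mod h"
  have "map_poly \<phi> p = map_poly \<phi> (p div h) * map_poly \<phi> h + map_poly \<phi> r"
    unfolding r_def by (metis div_mult_mod_eq embed_poly_add embed_poly_mult)
  hence "map_poly \<phi> h dvd map_poly \<phi> r"
    using assms by (metis dvd_add_right_iff dvd_triv_right)
  moreover have "degree r < degree h" if "r \<noteq> 0"
    using degree_mod_less[OF False, of p] that by (simp add: r_def)
  ultimately have "r = 0"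
    by (metis dvd_imp_degree_le degree_embed_poly embed_poly_eq_0_iff not_le)
  thus ?thesis unfolding r_def by (simp add: mod_eq_0_iff_dvd)
qed

end


section \<open>Primitive roots of unity and the factorisation of \<open>x^n - 1\<close>\<close>

lemma prod_linear_factors_dvd:
  fixes p :: "'b::field poly"
  assumes "finite S" "\<And>x. x \<in> S \<Longrightarrow> poly p x = 0"
  shows "(\<Prod>x\<in>S. [:-x, 1:]) dvd p"
  using assms
proof (induction S arbitrary: p rule: finite_induct)
  case empty
  then show ?case by simp
next
  case (insert x S)
  hence "(\<Prod>x\<in>S. [:-x, 1:]) dvd p" by auto
  then obtain r where r: "p = (\<Prod>x\<in>S. [:-x, 1:]) * r" by (elim dvdE)
  have "poly p x = 0" using insert by auto
  hence "(\<Prod>y\<in>S. x - y) * poly r x = 0" using r by (simp add: poly_prod)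
  moreover have "(\<Prod>y\<in>S. x - y) \<noteq> 0" using insert(1,2) by (auto simp: prod_zero_iff)
  ultimately obtain r' where "r = [:-x, 1:] * r'"
    using poly_eq_0_iff_dvd by (metis dvdE mult_eq_0_iff)
  hence "p = ([:-x, 1:] * (\<Prod>x\<in>S. [:-x, 1:])) * r'" using r by (metis mult.assoc mult.commute)
  thus ?case using insert(1,2) by simp
qed

lemma coeff_xn_minus_1: "0 < n \<Longrightarrow> coeff (monom 1 n - 1 :: 'a::comm_ring_1 poly) n = 1"
  by (simp add: coeff_monom)

lemma degree_xn_minus_1: "0 < n \<Longrightarrow> degree (monom 1 n - 1 :: 'a::field poly) = n"
proof -
  assume "0 < n"
  have "degree (monom 1 n - 1 :: 'a poly) \<le> n" by (rule degree_le) (auto simp: coeff_monom)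
  thus ?thesis using coeff_xn_minus_1[OF \<open>0 < n\<close>] by (metis le_degree le_antisym one_neq_zero)
qed

lemma xn_minus_1_nonzero: "0 < n \<Longrightarrow> monom 1 n - 1 \<noteq> (0 :: 'a::field poly)"
  by (metis coeff_0 coeff_xn_minus_1 zero_neq_one)

lemma power_mod_exponent: "t ^ n = 1 \<Longrightarrow> t ^ (k mod n) = (t::'b::comm_ring_1) ^ k"
  by (metis mult_div_mod_eq power_add power_mult power_one mult_1_left)

lemma root_poly_vanishes: "finite S \<Longrightarrow> j \<in> S \<Longrightarrow> poly (root_poly t S) (t ^ j) = 0"
  by (simp add: root_poly_def poly_prod) (rule prod_zero, auto)

lemma root_poly_at_1_nonzero:
  fixes t :: "'b::field"
  shows "finite S \<Longrightarrow> (\<And>j. j \<in> S \<Longrightarrow> t ^ j \<noteq> 1) \<Longrightarrow> poly (root_poly t S) 1 \<noteq> 0"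
  by (auto simp: root_poly_def poly_prod)

locale primitive_root_of_unity =
  fixes \<theta> :: "'b::field" and n :: nat
  assumes n_pos: "0 < n" and root: "\<theta> ^ n = 1"
    and primitive: "\<And>k. 0 < k \<Longrightarrow> k < n \<Longrightarrow> \<theta> ^ k \<noteq> 1"
begin

lemma power_root: "(\<theta> ^ k) ^ n = 1"
  by (metis mult.commute power_mult power_one root)

lemma inj_on_powers: "inj_on (\<lambda>k. \<theta> ^ k) {..<n}"
proof -
  have "\<theta> ^ i \<noteq> \<theta> ^ j" if "i < j" "j < n" for i j
  proof
    assume "\<theta> ^ i = \<theta> ^ j"
    hence "\<theta> ^ i * \<theta> ^ (j - i) = \<theta> ^ i * 1"
      using \<open>i < j\<close> by (metis le_add_diff_inverse less_imp_le power_add mult_1_right)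
    moreover have "\<theta> \<noteq> 0" using root n_pos by (metis power_0_left zero_neq_one gr_implies_not0)
    ultimately have "\<theta> ^ (j - i) = 1" by simp
    thus False using primitive[of "j - i"] that by simp
  qed
  thus ?thesis by (metis inj_onI lessThan_iff linorder_neqE_nat)
qed

lemma prod_roots_dvd:
  fixes p :: "'b poly"
  assumes "K \<subseteq> {..<n}" "\<And>k. k \<in> K \<Longrightarrow> poly p (\<theta> ^ k) = 0"
  shows "(\<Prod>k\<in>K. [:-(\<theta> ^ k), 1:]) dvd p"
proof -
  have inj: "inj_on (\<lambda>k. \<theta> ^ k) K" using inj_on_powers assms(1) by (rule inj_on_subset)
  have fin: "finite K" using assms(1) finite_subset by blast
  have "(\<Prod>x\<in>(\<lambda>k. \<theta> ^ k) ` K. [:-x, 1:]) dvd p"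
    using assms by (intro prod_linear_factors_dvd) (auto simp: fin)
  thus ?thesis by (simp add: prod.reindex[OF inj])
qed

text \<open>\<open>x^n - 1 = \<Prod>_{k<n} (x - \<theta>^k)\<close>: the product divides \<open>x^n - 1\<close>, and both are monic of
  degree \<open>n\<close>.\<close>
lemma xn_minus_1_factor: "(monom 1 n - 1 :: 'b poly) = (\<Prod>k<n. [:-(\<theta> ^ k), 1:])"
proof -
  let ?P = "\<Prod>k<n. [:-(\<theta> ^ k), 1:]"
  let ?M = "monom 1 n - 1 :: 'b poly"
  have "?P dvd ?M"
    by (rule prod_roots_dvd) (auto simp: poly_monom power_root)
  then obtain r where r: "?M = ?P * r" by (elim dvdE)
  have deg_P: "degree ?P = n" by (subst degree_prod_eq_sum_degree) auto
  have lc_P: "lead_coeff ?P = 1" by (simp add: lead_coeff_prod)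
  have cM: "coeff ?M n = 1" and deg_M: "degree ?M = n"
    using coeff_xn_minus_1 degree_xn_minus_1 n_pos by blast+
  have "r \<noteq> 0" using r cM by auto
  hence "degree ?M = degree ?P + degree r" using r
    by (metis degree_mult_eq lc_P leading_coeff_0_iff one_neq_zero)
  then obtain c where c: "r = [:c:]" using deg_M deg_P by (metis add_cancel_right_right degree_eq_zeroE)
  have "lead_coeff ?M = lead_coeff ?P * lead_coeff r" using r by (simp add: lead_coeff_mult)
  hence "c = 1" using c lc_P deg_M cM by simp
  thus ?thesis using r c by simp
qed

lemma quotient_xn_minus_1_factor:
  assumes "n = m * p" "S \<subseteq> {0<..<p}"
  shows "(monom 1 n - 1 :: 'b poly) div ([:-1, 1:] * root_poly (\<theta> ^ m) S)
         = (\<Prod>k\<in>{..<n} - insert 0 ((\<lambda>j. m * j) ` S). [:-(\<theta> ^ k), 1:])"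
proof -
  let ?L = "\<lambda>k. [:-(\<theta> ^ k), 1:]"
  let ?E = "insert 0 ((\<lambda>j. m * j) ` S)"
  have m_pos: "m > 0" using n_pos assms(1) by auto
  have fin_S: "finite S" using assms(2) finite_subset by blast
  have "(\<Prod>k<n. ?L k) = (\<Prod>k\<in>{..<n} - ?E. ?L k) * (\<Prod>k\<in>?E. ?L k)"
    by (rule prod.subset_diff) (use assms n_pos in auto)
  moreover have "(\<Prod>k\<in>?E. ?L k) = [:-1, 1:] * root_poly (\<theta> ^ m) S"
  proof -
    have "0 \<notin> (\<lambda>j. m * j) ` S" using assms(2) m_pos by auto
    hence "(\<Prod>k\<in>?E. ?L k) = ?L 0 * (\<Prod>k\<in>(\<lambda>j. m * j) ` S. ?L k)" using fin_S by simp
    also have "(\<Prod>k\<in>(\<lambda>j. m * j) ` S. ?L k) = (\<Prod>j\<in>S. ?L (m * j))"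
      using m_pos by (subst prod.reindex) (auto simp: inj_on_def)
    also have "\<dots> = root_poly (\<theta> ^ m) S" by (simp add: root_poly_def power_mult)
    finally show ?thesis by simp
  qed
  moreover have "root_poly (\<theta> ^ m) S \<noteq> 0" by (simp add: root_poly_def fin_S)
  hence "[:-1, 1:] * root_poly (\<theta> ^ m) S \<noteq> (0::'b poly)"
    by (metis mult_eq_0_iff pCons_eq_0_iff one_neq_zero)
  ultimately show ?thesis by (simp add: xn_minus_1_factor)
qed

end


section \<open>Reduction modulo \<open>x^n - 1\<close> and cyclic codes\<close>

lemma degree_mod_xn_minus_1:
  fixes p :: "'a::field poly"
  assumes "0 < n" shows "degree (p mod (monom 1 n - 1)) < n"
proof (cases "p mod (monom 1 n - 1) = 0")
  case False
  have "degree (p mod (monom 1 n - 1)) < degree (monom 1 n - 1 :: 'a poly)"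
    using degree_mod_less[OF xn_minus_1_nonzero[OF assms]] False by blast
  thus ?thesis using degree_xn_minus_1[OF assms, where 'a='a] by simp
qed (use assms in simp)

lemma codeword_degree:
  fixes c :: "'a::field poly"
  assumes "0 < n" "c \<in> cyclic_code n G" shows "degree c < n"
  using assms degree_mod_xn_minus_1 by (auto simp: cyclic_code_def)

lemma dvd_imp_in_cyclic_code: "H dvd P \<Longrightarrow> P mod (monom 1 n - 1) \<in> cyclic_code n H"
  by (auto simp: cyclic_code_def elim!: dvdE)

lemma poly_eq_sum_below:
  fixes p :: "'a::comm_ring_1 poly"
  assumes "degree p < n" shows "poly p x = (\<Sum>i<n. coeff p i * x ^ i)"
proof -
  have "poly p x = (\<Sum>i\<le>degree p. coeff p i * x ^ i)" by (rule poly_altdef)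
  also have "\<dots> = (\<Sum>i<n. coeff p i * x ^ i)"
    by (rule sum.mono_neutral_left) (use assms in \<open>auto simp: coeff_eq_0\<close>)
  finally show ?thesis .
qed

lemma sum_coeffs_eq_poly_1: "degree (p::'a::comm_ring_1 poly) < n \<Longrightarrow> (\<Sum>i<n. coeff p i) = poly p 1"
  by (simp add: poly_eq_sum_below)

lemma poly_mod_xn_minus_1:
  fixes p :: "'a::field poly"
  assumes "x ^ n = 1" shows "poly (p mod (monom 1 n - 1)) x = poly p x"
proof -
  have "poly p x = poly (p div (monom 1 n - 1)) x * poly (monom 1 n - 1) x
                   + poly (p mod (monom 1 n - 1)) x"
    by (metis div_mult_mod_eq poly_add poly_mult)
  thus ?thesis using assms by (simp add: poly_monom)
qed

text \<open>\<open>x^k \<equiv> x^(k mod n)\<close> modulo \<open>x^n - 1\<close>, since \<open>x^n - 1\<close> divides \<open>x^{n t} - 1\<close>.\<close>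
lemma monom_mod_xn_minus_1:
  fixes a :: "'a::field"
  assumes "0 < n" shows "monom a k mod (monom 1 n - 1) = monom a (k mod n)"
proof -
  let ?M = "monom 1 n - 1 :: 'a poly"
  obtain t where t: "k = k mod n + n * t" by (metis mod_mult_div_eq add.commute)
  define s where "s = (\<Sum>i<t. monom 1 n ^ i :: 'a poly)"
  have s: "monom 1 (n * t) = ?M * s + 1"
    using power_diff_1_eq[of "monom 1 n :: 'a poly" t]
    by (simp add: s_def monom_power mult.commute) (metis diff_add_cancel)
  have "monom a k = monom a (k mod n) * monom 1 (n * t)"
    by (subst t) (simp add: mult_monom)
  also have "\<dots> = monom a (k mod n) + (monom a (k mod n) * s) * ?M"
    by (simp only: s distrib_left mult_1_right mult_1_left ac_simps)
  finally have "monom a k mod ?M = monom a (k mod n) mod ?M" by (metis mod_mult_self1)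
  also have "\<dots> = monom a (k mod n)"
  proof (cases "a = 0")
    case False
    thus ?thesis using degree_xn_minus_1[OF assms, where 'a='a] assms
      by (intro mod_poly_less) (simp add: degree_monom_eq)
  qed simp
  finally show ?thesis .
qed

lemma mod_xn_minus_1_eq_sum:
  fixes p :: "'a::field poly"
  assumes "0 < n"
  shows "p mod (monom 1 n - 1) = (\<Sum>k\<le>degree p. monom (coeff p k) (k mod n))"
proof -
  let ?M = "monom 1 n - 1 :: 'a poly"
  let ?R = "\<Sum>k\<le>degree p. monom (coeff p k) (k mod n)"
  have "p mod ?M = (\<Sum>k\<le>degree p. monom (coeff p k) k) mod ?M"
    by (simp add: poly_as_sum_of_monoms)
  also have "\<dots> = (\<Sum>k\<le>degree p. monom (coeff p k) k mod ?M) mod ?M"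
    by (simp add: mod_sum_eq)
  also have "\<dots> = ?R mod ?M" by (simp add: monom_mod_xn_minus_1 assms)
  also have "\<dots> = ?R"
  proof (cases "?R = 0")
    case False
    have "\<not> n - Suc 0 < x mod n" for x using mod_less_divisor[OF assms, of x] by linarith
    hence "degree ?R \<le> n - 1"
      by (intro degree_le) (auto simp: coeff_sum coeff_monom intro!: sum.neutral)
    hence "degree ?R < degree ?M" using degree_xn_minus_1[OF assms, where 'a='a] assms by linarith
    thus ?thesis by (rule mod_poly_less)
  qed simp
  finally show ?thesis .
qed

definition support :: "'a::zero poly \<Rightarrow> nat set" where
  "support p = {i. coeff p i \<noteq> 0}"

lemma finite_support: "finite (support p)"
proof -
  have "support p \<subseteq> {..degree p}" by (auto simp: support_def intro: le_degree)
  thus ?thesis by (rule finite_subset) simp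
qed

lemma hamming_weight_eq_card_support: "hamming_weight p = card (support p)"
  by (simp add: hamming_weight_def support_def)

lemma support_mod_xn_minus_1:
  fixes p :: "'a::field poly"
  assumes "0 < n"
  shows "support (p mod (monom 1 n - 1)) \<subseteq> (\<lambda>k. k mod n) ` support p"
proof
  fix j assume "j \<in> support (p mod (monom 1 n - 1))"
  hence "(\<Sum>k\<le>degree p. if k mod n = j then coeff p k else 0) \<noteq> 0"
    using assms by (simp add: support_def mod_xn_minus_1_eq_sum coeff_sum coeff_monom)
  then obtain k where "coeff p k \<noteq> 0" "k mod n = j"
    by (auto elim: sum.not_neutral_contains_not_neutral split: if_splits)
  thus "j \<in> (\<lambda>k. k mod n) ` support p" by (auto simp: support_def)
qed

lemma support_mult:
  "support (p * q :: 'a::comm_semiring_0 poly) \<subseteq> (\<lambda>(i, j). i + j) ` (support p \<times> support q)"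
proof
  fix k assume "k \<in> support (p * q)"
  hence "(\<Sum>i\<le>k. coeff p i * coeff q (k - i)) \<noteq> 0" by (simp add: support_def coeff_mult)
  then obtain i where "i \<le> k" "coeff p i * coeff q (k - i) \<noteq> 0"
    by (auto elim: sum.not_neutral_contains_not_neutral)
  hence "(i, k - i) \<in> support p \<times> support q" "k = i + (k - i)" by (auto simp: support_def)
  thus "k \<in> (\<lambda>(i, j). i + j) ` (support p \<times> support q)" by force
qed

text \<open>Codewords have weight at most \<open>n\<close>, so the minimum odd-like weight is a minimum over a
  finite set.\<close>
lemma finite_odd_like_weights:
  fixes G :: "'a::field poly"
  assumes "0 < n"
  shows "finite (hamming_weight ` {c \<in> cyclic_code n G. odd_like n c})"
proof -
  have "hamming_weight c \<le> n" if "c \<in> cyclic_code n G" for c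
  proof -
    have "support c \<subseteq> {..<n}"
      using codeword_degree[OF assms that] by (fastforce simp: support_def dest: le_degree)
    thus ?thesis
      using card_mono[of "{..<n}" "support c"] by (simp add: hamming_weight_eq_card_support)
  qed
  hence "hamming_weight ` {c \<in> cyclic_code n G. odd_like n c} \<subseteq> {..n}" by auto
  thus ?thesis by (rule finite_subset) simp
qed

lemma min_odd_like_weight_le:
  fixes c :: "'a::field poly"
  assumes "0 < n" "c \<in> cyclic_code n G" "odd_like n c"
  shows "min_odd_like_weight n (cyclic_code n G) \<le> hamming_weight c"
  unfolding min_odd_like_weight_def
  by (rule Min_le[OF finite_odd_like_weights[OF assms(1)]]) (use assms in auto)

text \<open>If \<open>G(1) \<noteq> 0\<close>, the code contains odd-like words (e.g. \<open>G\<close> itself), so the minimum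
  odd-like weight is attained.\<close>
lemma min_odd_like_weight_attained:
  fixes G :: "'a::field poly"
  assumes "0 < n" "poly G 1 \<noteq> 0"
  obtains c where "c \<in> cyclic_code n G" "odd_like n c"
    "hamming_weight c = min_odd_like_weight n (cyclic_code n G)"
proof -
  let ?c = "G mod (monom 1 n - 1)"
  have "?c \<in> cyclic_code n G" by (rule dvd_imp_in_cyclic_code) simp
  moreover have "odd_like n ?c"
    using assms
    by (simp add: odd_like_def sum_coeffs_eq_poly_1 degree_mod_xn_minus_1 poly_mod_xn_minus_1)
  ultimately have "min_odd_like_weight n (cyclic_code n G)
                     \<in> hamming_weight ` {c \<in> cyclic_code n G. odd_like n c}"
    unfolding min_odd_like_weight_def by (intro Min_in finite_odd_like_weights assms(1)) blast
  thus ?thesis by (auto intro: that)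
qed


section \<open>The multiplier and the product of a codeword with its image\<close>

text \<open>The multiplier \<open>c(x) \<mapsto> c(x^\<mu>) mod (x^n - 1)\<close> on words of length \<open>n\<close>.\<close>
definition multiplier :: "nat \<Rightarrow> nat \<Rightarrow> 'a::comm_ring_1 poly \<Rightarrow> 'a poly" where
  "multiplier \<mu> n c = (\<Sum>i<n. monom (coeff c i) (\<mu> * i mod n))"

text \<open>The multiplier moves coordinates, so it does not increase the weight.\<close>
lemma support_multiplier: "support (multiplier \<mu> n c) \<subseteq> (\<lambda>i. \<mu> * i mod n) ` support c"
proof
  fix j assume "j \<in> support (multiplier \<mu> n c)"
  hence "(\<Sum>i<n. if \<mu> * i mod n = j then coeff c i else 0) \<noteq> 0"
    by (simp add: support_def multiplier_def coeff_sum coeff_monom)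
  then obtain i where "coeff c i \<noteq> 0" "\<mu> * i mod n = j"
    by (auto elim: sum.not_neutral_contains_not_neutral split: if_splits)
  thus "j \<in> (\<lambda>i. \<mu> * i mod n) ` support c" by (auto simp: support_def)
qed

lemma weight_product_multiplier:
  fixes c :: "'a::field poly"
  assumes "0 < n"
  shows "hamming_weight ((c * multiplier \<mu> n c) mod (monom 1 n - 1))
           \<le> hamming_weight c * hamming_weight c"
proof -
  let ?s = "multiplier \<mu> n c"
  let ?f = "\<lambda>(i, j). (i + j) mod n"
  have "support ((c * ?s) mod (monom 1 n - 1)) \<subseteq> ?f ` (support c \<times> support ?s)"
    using support_mod_xn_minus_1[OF assms, of "c * ?s"] support_mult[of c ?s] by fastforce
  hence "card (support ((c * ?s) mod (monom 1 n - 1))) \<le> card (?f ` (support c \<times> support ?s))"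
    by (rule card_mono[rotated]) (simp add: finite_support)
  also have "\<dots> \<le> card (support c) * card (support ?s)"
    using card_image_le[of "support c \<times> support ?s" ?f]
    by (simp add: finite_support card_cartesian_product)
  also have "card (support ?s) \<le> card (support c)"
    by (rule order_trans[OF card_mono[OF finite_imageI[OF finite_support] support_multiplier]
          card_image_le[OF finite_support]])
  finally show ?thesis by (simp add: hamming_weight_eq_card_support)
qed

text \<open>The coordinate sum of the product is the square of the coordinate sum of \<open>c\<close>.\<close>
lemma odd_like_product_multiplier:
  fixes c :: "'a::field poly"
  assumes "0 < n" "degree c < n" "odd_like n c"
  shows "odd_like n ((c * multiplier \<mu> n c) mod (monom 1 n - 1))"
proof -
  let ?p = "(c * multiplier \<mu> n c) mod (monom 1 n - 1)"
  have "(\<Sum>i<n. coeff ?p i) = poly c 1 * poly (multiplier \<mu> n c) 1"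
    by (simp add: sum_coeffs_eq_poly_1 degree_mod_xn_minus_1 assms(1) poly_mod_xn_minus_1)
  also have "\<dots> = (\<Sum>i<n. coeff c i) * (\<Sum>i<n. coeff c i)"
    by (simp add: multiplier_def poly_sum poly_monom sum_coeffs_eq_poly_1[OF assms(2)])
  finally show ?thesis using assms(3) by (simp add: odd_like_def)
qed

context field_embedding
begin

lemma codeword_vanishes:
  assumes "c \<in> cyclic_code n G" "t ^ n = 1" "poly (map_poly \<phi> G) t = 0"
  shows "poly (map_poly \<phi> c) t = 0"
proof -
  let ?M = "monom 1 n - 1 :: 'a poly"
  obtain a where "c = (G * a) mod ?M" using assms(1) by (auto simp: cyclic_code_def)
  hence "c = G * a - (G * a div ?M) * ?M" by (simp add: minus_div_mult_eq_mod)
  hence "map_poly \<phi> c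
           = map_poly \<phi> G * map_poly \<phi> a - map_poly \<phi> (G * a div ?M) * (monom 1 n - 1)"
    by (simp add: embed_poly_diff embed_poly_mult map_poly_monom embed_one)
  thus ?thesis using assms(2,3) by (simp add: poly_monom)
qed

lemma poly_embed_multiplier:
  assumes "degree c < n" "t ^ n = 1"
  shows "poly (map_poly \<phi> (multiplier \<mu> n c)) t = poly (map_poly \<phi> c) (t ^ \<mu>)"
proof -
  have "poly (map_poly \<phi> (multiplier \<mu> n c)) t
          = (\<Sum>i<n. \<phi> (coeff c i) * t ^ (\<mu> * i mod n))"
    by (simp add: multiplier_def embed_poly_sum map_poly_monom poly_sum poly_monom)
  also have "\<dots> = (\<Sum>i<n. \<phi> (coeff c i) * (t ^ \<mu>) ^ i)"
    by (simp add: power_mod_exponent[OF assms(2)] power_mult)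
  also have "\<dots> = poly (map_poly \<phi> c) (t ^ \<mu>)"
    using poly_eq_sum_below[of "map_poly \<phi> c" n "t ^ \<mu>"] assms(1)
    by (simp add: degree_embed_poly)
  finally show ?thesis .
qed

end


section \<open>The square bound for codes with a covered set of zeros\<close>

locale cyclic_code_roots = field_embedding \<phi> + primitive_root_of_unity \<theta> n
  for \<phi> :: "'a::field \<Rightarrow> 'b::field" and \<theta> :: 'b and n :: nat
begin

lemma covered_code_weight_bound:
  assumes "c \<in> cyclic_code n G" "odd_like n c"
    and zeros: "\<And>k. k \<in> Z \<Longrightarrow> poly (map_poly \<phi> G) (\<theta> ^ k) = 0"
    and H: "map_poly \<phi> H = (\<Prod>k\<in>K. [:-(\<theta> ^ k), 1:])" and "K \<subseteq> {..<n}"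
    and cover: "\<And>k. k \<in> K \<Longrightarrow> k \<in> Z \<or> \<mu> * k mod n \<in> Z"
  shows "min_odd_like_weight n (cyclic_code n H) \<le> hamming_weight c * hamming_weight c"
proof -
  let ?p = "c * multiplier \<mu> n c"
  have deg_c: "degree c < n" using codeword_degree[OF n_pos assms(1)] .
  have "poly (map_poly \<phi> ?p) (\<theta> ^ k) = 0" if "k \<in> K" for k
  proof -
    have "poly (map_poly \<phi> ?p) (\<theta> ^ k)
        = poly (map_poly \<phi> c) (\<theta> ^ k) * poly (map_poly \<phi> c) (\<theta> ^ (\<mu> * k mod n))"
      by (simp add: embed_poly_mult poly_embed_multiplier[OF deg_c power_root]
          power_mod_exponent[OF root] mult.commute flip: power_mult)
    thus ?thesis using cover[OF that] codeword_vanishes[OF assms(1) power_root zeros] by auto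
  qed
  hence "H dvd ?p"
    using prod_roots_dvd[OF assms(5)] H dvd_of_embed_poly_dvd by metis
  hence "min_odd_like_weight n (cyclic_code n H) \<le> hamming_weight (?p mod (monom 1 n - 1))"
    by (intro min_odd_like_weight_le n_pos dvd_imp_in_cyclic_code
        odd_like_product_multiplier deg_c assms(2))
  also have "\<dots> \<le> hamming_weight c * hamming_weight c" by (rule weight_product_multiplier[OF n_pos])
  finally show ?thesis .
qed

end


section \<open>Discrete logarithms and quadratic residues modulo an odd prime\<close>

lemma primroot_power_cong_iff:
  fixes p g a b :: nat
  assumes "prime p" "residue_primroot p g"
  shows "[g ^ a = g ^ b] (mod p) \<longleftrightarrow> [a = b] (mod p - 1)"
  using order_divides_expdiff[of p g a b] assms by (simp add: residue_primroot_def totient_prime)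

lemma discrete_log_exists:
  fixes p g x :: nat
  assumes "prime p" "residue_primroot p g" "\<not> p dvd x"
  obtains a where "[x = g ^ a] (mod p)"
proof -
  have p1: "p > 1" using assms(1) prime_gt_1_nat by blast
  have "coprime x p" using assms(1,3) by (metis coprime_commute prime_imp_coprime)
  hence "x mod p \<in> totatives p"
    using p1 assms(3) by (auto simp: in_totatives_iff mod_greater_zero_iff_not_dvd)
  then obtain a where "g ^ a mod p = x mod p"
    using residue_primroot_is_generator[OF p1 assms(2)] unfolding bij_betw_def by force
  hence "[x = g ^ a] (mod p)" by (simp add: cong_def)
  thus ?thesis by (rule that)
qed

lemma primroot_power_not_dvd:
  fixes p g x :: nat
  assumes "prime p" "residue_primroot p g" "[x = g ^ a] (mod p)"
  shows "\<not> p dvd x"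
proof
  assume "p dvd x"
  hence "p dvd g ^ a" using assms(3) by (metis cong_dvd_iff)
  hence "p dvd g" using assms(1) prime_dvd_power by blast
  moreover have "coprime p g" using assms(2) by (simp add: residue_primroot_def)
  ultimately show False using assms(1) by (metis coprime_absorb_left not_prime_unit)
qed

lemma QuadRes_iff_even_exponent:
  fixes p g x a :: nat
  assumes "prime p" "odd p" "residue_primroot p g" "[x = g ^ a] (mod p)"
  shows "QuadRes (int p) (int x) \<longleftrightarrow> even a"
proof
  assume "even a"
  then obtain c where "a = 2 * c" by (elim evenE)
  hence "[(g ^ c) ^ 2 = x] (mod p)" using assms(4) by (simp add: power_mult cong_sym mult.commute)
  hence "[int (g ^ c) ^ 2 = int x] (mod int p)" by (metis cong_int_iff of_nat_power)
  thus "QuadRes (int p) (int x)" by (auto simp: QuadRes_def)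
next
  assume "QuadRes (int p) (int x)"
  then obtain y :: int where y: "[y ^ 2 = int x] (mod int p)" by (auto simp: QuadRes_def)
  define z where "z = nat (y mod int p)"
  have "int z = y mod int p" using assms(1) prime_gt_0_nat by (simp add: z_def)
  hence "[int z = y] (mod int p)" by (simp add: cong_def)
  hence "[int z ^ 2 = y ^ 2] (mod int p)" by (rule cong_pow)
  hence "[int (z ^ 2) = int x] (mod int p)" using y by (metis cong_trans of_nat_power)
  hence zx: "[z ^ 2 = x] (mod p)" by (simp only: cong_int_iff)
  have "\<not> p dvd x" by (rule primroot_power_not_dvd[OF assms(1,3,4)])
  hence "\<not> p dvd z ^ 2" using zx by (metis cong_dvd_iff)
  hence "\<not> p dvd z" by (metis dvd_power dvd_trans zero_less_numeral)
  then obtain b where b: "[z = g ^ b] (mod p)" using discrete_log_exists[OF assms(1,3)] by blast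
  have "[(g ^ b) ^ 2 = z ^ 2] (mod p)" using b by (intro cong_pow) (rule cong_sym)
  hence "[g ^ (2 * b) = g ^ a] (mod p)"
    using zx assms(4) by (simp add: power_mult mult.commute) (metis cong_trans)
  hence "[2 * b = a] (mod p - 1)" using primroot_power_cong_iff[OF assms(1,3)] by blast
  moreover have "2 dvd p - 1" using assms(2) by simp
  ultimately have "[2 * b = a] (mod 2)" by (metis cong_dvd_modulus_nat)
  thus "even a" by (simp add: cong_def) presburger
qed

lemma primroot_times_nonresidue:
  fixes p gp \<mu> j :: nat
  assumes "prime p" "odd p" "residue_primroot p gp" "[\<mu> = gp] (mod p)"
    and "0 < j" "j < p" "j \<notin> QR_set p"
  shows "\<mu> * j mod p \<in> QR_set p"
proof -
  have "\<not> p dvd j" using assms(5,6) by (auto dest: dvd_imp_le)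
  then obtain b where b: "[j = gp ^ b] (mod p)" using discrete_log_exists[OF assms(1,3)] by blast
  have "odd b" using assms(5-7) QuadRes_iff_even_exponent[OF assms(1-3) b] by (simp add: QR_set_def)
  have "[\<mu> * j = gp * gp ^ b] (mod p)" using assms(4) b by (rule cong_mult)
  hence jc: "[\<mu> * j mod p = gp ^ Suc b] (mod p)" by (simp add: cong_def)
  have "QuadRes (int p) (int (\<mu> * j mod p))"
    using QuadRes_iff_even_exponent[OF assms(1-3) jc] \<open>odd b\<close> by simp
  moreover have "0 < \<mu> * j mod p"
    using primroot_power_not_dvd[OF assms(1,3) jc] by (auto intro: Nat.gr0I)
  moreover have "\<mu> * j mod p < p" using assms(1) prime_gt_0_nat by simp
  ultimately show ?thesis by (simp add: QR_set_def)
qed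


section \<open>Membership in \<open>U_0\<close>\<close>

lemma cong_solvable_gcd:
  fixes A B a b :: nat
  assumes "0 < A" "0 < B" "[a = b] (mod gcd A B)"
  obtains s where "s < lcm A B" "[s = a] (mod A)" "[s = b] (mod B)"
proof -
  have "[int a = int b] (mod int (gcd A B))" using assms(3) by (simp add: cong_int_iff)
  then obtain T :: int where T: "int a - int b = int (gcd A B) * T"
    by (auto simp: cong_iff_dvd_diff elim!: dvdE)
  obtain x y :: int where xy: "x * int A + y * int B = int (gcd A B)"
    using bezout_int[of "int A" "int B"] by auto
  define s0 where "s0 = int a - x * int A * T"
  define L where "L = lcm A B"
  have L_pos: "0 < L" using assms(1,2) by (simp add: L_def lcm_pos_nat)
  define s where "s = nat (s0 mod int L)"
  have s_eq: "int s = s0 mod int L" using L_pos by (simp add: s_def)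
  have "[s0 = int a] (mod int A)" by (simp add: s0_def cong_iff_dvd_diff)
  moreover have "s0 - int b = (int (gcd A B) - x * int A) * T"
    using T by (simp add: s0_def algebra_simps)
  hence "s0 - int b = y * int B * T" by (simp flip: xy)
  hence "[s0 = int b] (mod int B)" by (simp add: cong_iff_dvd_diff)
  moreover have "[int s = s0] (mod int A)" "[int s = s0] (mod int B)"
    using s_eq by (auto simp: L_def cong_def mod_mod_cancel)
  ultimately have "[int s = int a] (mod int A)" "[int s = int b] (mod int B)"
    using cong_trans by blast+
  moreover have "int s < int L" using s_eq L_pos by simp
  hence "s < L" by simp
  ultimately show ?thesis using that by (simp add: L_def cong_int_iff)
qed

lemma even_shift_cong:
  fixes a b d :: nat
  assumes "even d" "0 < d" "even (a + b)"
  obtains i where "i < d" "even i" "[i + b = a] (mod d)"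
proof
  let ?i = "(a + b * (d - 1)) mod d"
  show "?i < d" using assms(2) by simp
  have "odd (d - 1)" using assms(1,2) by simp
  hence "even (a + b * (d - 1))" using assms(3) by simp
  thus "even ?i" using assms(1) by (simp add: dvd_mod)
  have "[?i + b = a + b * (d - 1) + b] (mod d)" by (simp add: cong_def mod_add_left_eq)
  also have "a + b * (d - 1) + b = a + d * b" using assms(2) by (cases d) (auto simp: algebra_simps)
  also have "[a + d * b = a] (mod d)" by (simp add: cong_def)
  finally show "[?i + b = a] (mod d)" .
qed

text \<open>For even moduli \<open>A, B\<close> and \<open>a + b\<close> even, the pair \<open>(a mod A, b mod B)\<close> is represented as
  \<open>(s + i, s)\<close> with \<open>s < lcm A B\<close> and an even \<open>i < gcd A B\<close>: this is the exponent pattern of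
  \<open>g^s \<nu>^i\<close> modulo \<open>n_1\<close> and \<open>n_2\<close>.\<close>
lemma exponent_representation:
  fixes A B a b :: nat
  assumes "even A" "0 < A" "even B" "0 < B" "even (a + b)"
  obtains s i where "s < lcm A B" "i < gcd A B" "even i" "[s + i = a] (mod A)" "[s = b] (mod B)"
proof -
  obtain i where i: "i < gcd A B" "even i" "[i + b = a] (mod gcd A B)"
    using even_shift_cong[of "gcd A B" a b] assms by auto
  have Ai: "a + (A - 1) * i + i = a + A * i" using assms(2) by (cases A) (auto simp: algebra_simps)
  have "[a + (A - 1) * i + i = a] (mod gcd A B)"
    unfolding Ai by (simp add: cong_add_lcancel_0_nat cong_0_iff)
  also have "[a = i + b] (mod gcd A B)" using i(3) by (rule cong_sym)
  finally have "[a + (A - 1) * i + i = b + i] (mod gcd A B)" by (simp only: add.commute[of i b])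
  hence "[a + (A - 1) * i = b] (mod gcd A B)" by (simp only: cong_add_rcancel_nat)
  then obtain s where s: "s < lcm A B" "[s = a + (A - 1) * i] (mod A)" "[s = b] (mod B)"
    using cong_solvable_gcd assms(2,4) by blast
  have "[s + i = a + (A - 1) * i + i] (mod A)" using s(2) by (simp add: cong_add)
  also have "[a + (A - 1) * i + i = a] (mod A)"
    unfolding Ai by (simp add: cong_add_lcancel_0_nat cong_0_iff)
  finally show ?thesis using that s(1,3) i(1,2) by blast
qed

locale U0_data =
  fixes n1 n2 g1 g2 g \<nu> :: nat
  assumes prime1: "prime n1" and prime2: "prime n2" and odd1: "odd n1" and odd2: "odd n2"
    and n1_neq_n2: "n1 \<noteq> n2"
    and primroot1: "residue_primroot n1 g1" and primroot2: "residue_primroot n2 g2"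
    and g1: "[g = g1] (mod n1)" and g2: "[g = g2] (mod n2)"
    and \<nu>1: "[\<nu> = g] (mod n1)" and \<nu>2: "[\<nu> = 1] (mod n2)"
begin

text \<open>An element \<open>u\<close> whose discrete logarithms \<open>a\<close> modulo \<open>n_1\<close> and \<open>b\<close> modulo \<open>n_2\<close> have even
  sum lies in \<open>U_0\<close>: there are \<open>s < e\<close> and an even \<open>i < d\<close> with \<open>s + i \<equiv> a (mod n_1 - 1)\<close> and
  \<open>s \<equiv> b (mod n_2 - 1)\<close>, so that \<open>u \<equiv> g^s \<nu>^i (mod n)\<close>.\<close>
lemma U0_membership:
  assumes "u < n1 * n2" "[u = g1 ^ a] (mod n1)" "[u = g2 ^ b] (mod n2)" "even (a + b)"
  shows "u \<in> U_set 0 (n1 * n2) ((n1 - 1) * (n2 - 1) div gcd (n1 - 1) (n2 - 1))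
                   (gcd (n1 - 1) (n2 - 1)) g \<nu>"
proof -
  define A B where "A = n1 - 1" and "B = n2 - 1"
  have "2 < n1" "2 < n2"
    using prime1 prime2 odd1 odd2 prime_ge_2_nat by (metis le_neq_implies_less even_numeral)+
  hence "even A" "0 < A" "even B" "0 < B" using odd1 odd2 by (auto simp: A_def B_def)
  then obtain s i where
    s: "s < lcm A B" "i < gcd A B" "even i" "[s + i = a] (mod A)" "[s = b] (mod B)"
    using exponent_representation assms(4) by blast
  have "[\<nu> = g1] (mod n1)" using \<nu>1 g1 by (rule cong_trans)
  hence "[g ^ s * \<nu> ^ i = g1 ^ (s + i)] (mod n1)"
    using g1 by (simp add: power_add cong_mult cong_pow)
  also have "[g1 ^ (s + i) = g1 ^ a] (mod n1)"
    using primroot_power_cong_iff[OF prime1 primroot1] s(4) by (simp add: A_def)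
  also have "[g1 ^ a = u] (mod n1)" using assms(2) by (rule cong_sym)
  finally have c1: "[g ^ s * \<nu> ^ i = u] (mod n1)" .
  have "[g ^ s * \<nu> ^ i = g2 ^ s * 1 ^ i] (mod n2)" using g2 \<nu>2 by (intro cong_mult cong_pow)
  also have "[g2 ^ s * 1 ^ i = g2 ^ b] (mod n2)"
    using primroot_power_cong_iff[OF prime2 primroot2] s(5) by (simp add: B_def)
  also have "[g2 ^ b = u] (mod n2)" using assms(3) by (rule cong_sym)
  finally have c2: "[g ^ s * \<nu> ^ i = u] (mod n2)" .
  have "coprime n1 n2" using prime1 prime2 n1_neq_n2 by (simp add: primes_coprime)
  hence "[g ^ s * \<nu> ^ i = u] (mod n1 * n2)" using c1 c2 coprime_cong_mult_nat by blast
  hence "u = (g ^ s * \<nu> ^ i) mod (n1 * n2)" using assms(1) by (simp add: cong_def)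
  moreover have "s < A * B div gcd A B" using s(1) by (simp add: lcm_nat_def)
  moreover have "i mod 2 = 0" using s(3) by presburger
  ultimately have "\<exists>s' i'. u = (g ^ s' * \<nu> ^ i') mod (n1 * n2) \<and> s' < A * B div gcd A B
      \<and> i' < gcd A B \<and> i' mod 2 = 0"
    using s(2) by (intro exI[of _ s] exI[of _ i]) simp
  thus ?thesis by (simp add: U_set_def A_def B_def)
qed

text \<open>All elements \<open>g^s \<nu>^i mod n\<close> are nonzero residues, as they are units modulo \<open>n_1\<close>.\<close>
lemma U_set_range: "U_set r (n1 * n2) e d g \<nu> \<subseteq> {0<..<n1 * n2}"
proof
  fix x assume "x \<in> U_set r (n1 * n2) e d g \<nu>"
  then obtain s i where x: "x = (g ^ s * \<nu> ^ i) mod (n1 * n2)" by (auto simp: U_set_def)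
  have "[\<nu> = g1] (mod n1)" using \<nu>1 g1 by (rule cong_trans)
  hence "[g ^ s * \<nu> ^ i = g1 ^ (s + i)] (mod n1)" using g1
    by (simp add: power_add cong_mult cong_pow)
  hence "\<not> n1 * n2 dvd g ^ s * \<nu> ^ i"
    using primroot_power_not_dvd[OF prime1 primroot1] by (meson dvd_mult_left)
  thus "x \<in> {0<..<n1 * n2}"
    using x prime1 prime2 prime_gt_0_nat by (auto simp: mod_greater_zero_iff_not_dvd)
qed

end


section \<open>The defining set of \<open>G000\<close> and the covering property\<close>

lemma QR_set_subset: "QR_set p \<subseteq> {0<..<p}" and QNR_set_subset: "QNR_set p \<subseteq> {0<..<p}"
  by (auto simp: QR_set_def QNR_set_def)

lemma finite_QR_set: "finite (QR_set p)"
  using QR_set_subset finite_subset by (metis finite_greaterThanLessThan)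

text \<open>Exponents \<open>k\<close> of the zeros \<open>\<theta>^k\<close> of \<open>u(x) d_0^{(p)}(x) d_0^{(r)}(x)\<close> for \<open>n = p r\<close>.\<close>
definition defining_set :: "nat set \<Rightarrow> nat \<Rightarrow> nat \<Rightarrow> nat set" where
  "defining_set U p r = U \<union> (\<lambda>j. r * j) ` QR_set p \<union> (\<lambda>j. p * j) ` QR_set r"

lemma defining_set_commute: "defining_set U p r = defining_set U r p"
  by (auto simp: defining_set_def)

lemma defining_set_zeros:
  fixes t :: "'b::field"
  assumes "finite U" "k \<in> defining_set U p r"
  shows "poly (root_poly t U * root_poly (t ^ r) (QR_set p) * root_poly (t ^ p) (QR_set r)) (t ^ k)
           = 0"
  using assms finite_QR_set by (auto simp: defining_set_def root_poly_vanishes power_mult)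

text \<open>\<open>G000(1) \<noteq> 0\<close>: the defining set avoids the exponent \<open>0\<close>.\<close>
lemma (in primitive_root_of_unity) generator_nonzero_at_1:
  assumes n: "n = p * r" and U: "U \<subseteq> {0<..<n}"
  shows "poly (root_poly \<theta> U * root_poly (\<theta> ^ r) (QR_set p) * root_poly (\<theta> ^ p) (QR_set r)) 1
           \<noteq> 0"
proof -
  have pr: "0 < p" "0 < r" using n n_pos by auto
  have "poly (root_poly \<theta> U) 1 \<noteq> 0"
    using U primitive finite_subset[OF U] by (intro root_poly_at_1_nonzero) auto
  moreover have "(\<theta> ^ r) ^ j \<noteq> 1" if "j \<in> QR_set p" for j
    using pr that unfolding power_mult[symmetric]
    by (intro primitive) (simp_all add: QR_set_def n mult.commute[of p r])
  hence "poly (root_poly (\<theta> ^ r) (QR_set p)) 1 \<noteq> 0"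
    by (intro root_poly_at_1_nonzero finite_QR_set)
  moreover have "(\<theta> ^ p) ^ j \<noteq> 1" if "j \<in> QR_set r" for j
    using pr that unfolding power_mult[symmetric]
    by (intro primitive) (simp_all add: QR_set_def n)
  hence "poly (root_poly (\<theta> ^ p) (QR_set r)) 1 \<noteq> 0"
    by (intro root_poly_at_1_nonzero finite_QR_set)
  ultimately show ?thesis by simp
qed

text \<open>Let \<open>\<mu>\<close> be a primitive root modulo \<open>p\<close> and \<open>1\<close> modulo \<open>r\<close>.  If \<open>U\<close> contains all units
  whose discrete logarithms have even sum, then for every nonzero exponent \<open>k\<close> outside
  \<open>p \<cdot> QNR(r)\<close>, \<open>k\<close> or \<open>\<mu> k\<close> lies in the defining set: multiplication by \<open>\<mu>\<close> changes the
  parity of the logarithm modulo \<open>p\<close> and fixes the one modulo \<open>r\<close>.\<close>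
lemma multiplier_covers:
  fixes p r gp gr \<mu> n k :: nat and U :: "nat set"
  assumes "prime p" "prime r" "odd p" and n: "n = p * r"
    and "residue_primroot p gp" "residue_primroot r gr" "[\<mu> = gp] (mod p)" "[\<mu> = 1] (mod r)"
    and U: "\<And>u a b. u < n \<Longrightarrow> [u = gp ^ a] (mod p) \<Longrightarrow> [u = gr ^ b] (mod r) \<Longrightarrow> even (a + b)
               \<Longrightarrow> u \<in> U"
    and k: "0 < k" "k < n" "k \<notin> (\<lambda>j. p * j) ` QNR_set r"
  shows "k \<in> defining_set U p r \<or> \<mu> * k mod n \<in> defining_set U p r"
proof (cases "p dvd k")
  case True
  then obtain j where "k = p * j" by (elim dvdE)
  moreover from this have "j \<in> QR_set r" using n k by (auto simp: QR_set_def QNR_set_def)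
  ultimately show ?thesis by (auto simp: defining_set_def)
next
  case p_ndvd: False
  show ?thesis
  proof (cases "r dvd k")
    case True
    then obtain j where j: "k = r * j" by (elim dvdE)
    have "0 < j" "j < p" using j n k by auto
    moreover have "\<mu> * k mod n = r * (\<mu> * j mod p)"
      using j n by (simp add: mult.commute mult.left_commute mod_mult_mult1)
    ultimately show ?thesis
      using primroot_times_nonresidue[OF assms(1,3,5,7)] j by (auto simp: defining_set_def)
  next
    case r_ndvd: False
    obtain a where a: "[k = gp ^ a] (mod p)" using discrete_log_exists[OF assms(1,5) p_ndvd] .
    obtain b where b: "[k = gr ^ b] (mod r)" using discrete_log_exists[OF assms(2,6) r_ndvd] .
    have "[\<mu> * k mod n = gp ^ Suc a] (mod p)"
      using cong_mult[OF assms(7) a] n by (simp add: cong_def mod_mod_cancel)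
    moreover have "[\<mu> * k mod n = gr ^ b] (mod r)"
      using cong_mult[OF assms(8) b] n by (simp add: cong_def mod_mod_cancel)
    ultimately show ?thesis
      using U[OF k(2) a b] U[of "\<mu> * k mod n" "Suc a" b] k(2) by (auto simp: defining_set_def)
  qed
qed


section \<open>The bound for the two codes\<close>

context cyclic_code_roots
begin

lemma nonresidue_code_weight_bound:
  fixes G H :: "'a poly" and U :: "nat set" and p r gp gr \<mu> :: nat
  assumes n: "n = p * r" and "prime p" "prime r" "odd p"
    and "residue_primroot p gp" "residue_primroot r gr" "[\<mu> = gp] (mod p)" "[\<mu> = 1] (mod r)"
    and U: "\<And>u a b. u < n \<Longrightarrow> [u = gp ^ a] (mod p) \<Longrightarrow> [u = gr ^ b] (mod r) \<Longrightarrow> even (a + b)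
               \<Longrightarrow> u \<in> U"
    and zeros: "\<And>k. k \<in> defining_set U p r \<Longrightarrow> poly (map_poly \<phi> G) (\<theta> ^ k) = 0"
    and H: "map_poly \<phi> H = (monom 1 n - 1) div ([:-1, 1:] * root_poly (\<theta> ^ p) (QNR_set r))"
    and c: "c \<in> cyclic_code n G" "odd_like n c"
  shows "min_odd_like_weight n (cyclic_code n H) \<le> hamming_weight c * hamming_weight c"
proof (rule covered_code_weight_bound[OF c zeros])
  let ?K = "{..<n} - insert 0 ((\<lambda>j. p * j) ` QNR_set r)"
  show "map_poly \<phi> H = (\<Prod>k\<in>?K. [:-(\<theta> ^ k), 1:])"
    unfolding H using n QNR_set_subset by (rule quotient_xn_minus_1_factor)
  show "?K \<subseteq> {..<n}" by auto
  show "k \<in> defining_set U p r \<or> \<mu> * k mod n \<in> defining_set U p r" if "k \<in> ?K" for k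
    using multiplier_covers[OF assms(2-4) n assms(5-9)] that by auto
qed

end


theorem mainTheorem3:
  fixes n1 n2 q g1 g2 g \<nu> :: nat
    and \<phi> :: "'a::{finite,field} \<Rightarrow> 'b::{finite,field}"
    and \<theta> :: 'b
    and G000 H1 H2 :: "'a poly"
  defines "n \<equiv> n1 * n2"
  defines "d \<equiv> gcd (n1 - 1) (n2 - 1)"
  defines "e \<equiv> (n1 - 1) * (n2 - 1) div d"
  defines "N \<equiv> ord n q"
  defines "U0 \<equiv> U_set 0 n e d g \<nu>"
  assumes "prime n1" and "prime n2" and "odd n1" and "odd n2" and "n1 \<noteq> n2"
    and "CARD('a) = q" and "coprime q n"
    \<comment> \<open>GF(q^N) and an embedding of GF(q) into it\<close>
    and "CARD('b) = q ^ N"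
    and "\<And>x y. \<phi> (x + y) = \<phi> x + \<phi> y" and "\<And>x y. \<phi> (x * y) = \<phi> x * \<phi> y" and "\<phi> 1 = 1"
    \<comment> \<open>primitive n-th root of unity\<close>
    and "\<theta> ^ n = 1" and "\<And>k. 0 < k \<Longrightarrow> k < n \<Longrightarrow> \<theta> ^ k \<noteq> 1"
    \<comment> \<open>primitive roots and the elements g, nu\<close>
    and "residue_primroot n1 g1" and "residue_primroot n2 g2"
    and "[g = g1] (mod n1)" and "[g = g2] (mod n2)"
    and "[\<nu> = g] (mod n1)" and "[\<nu> = 1] (mod n2)"
    \<comment> \<open>hypotheses of the theorem\<close>
    and "q mod n \<in> U0"
    and "QuadRes (int n1) (int q)" and "QuadRes (int n2) (int q)"
    \<comment> \<open>the generator polynomials, which lie in GF(q)[x]\<close>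
    and "map_poly \<phi> G000 = root_poly \<theta> U0 * root_poly (\<theta> ^ n2) (QR_set n1)
                                          * root_poly (\<theta> ^ n1) (QR_set n2)"
    and "map_poly \<phi> H1 = (Polynomial.monom 1 n - 1) div ([:-1, 1:] * root_poly (\<theta> ^ n2) (QNR_set n1))"
    and "map_poly \<phi> H2 = (Polynomial.monom 1 n - 1) div ([:-1, 1:] * root_poly (\<theta> ^ n1) (QNR_set n2))"
  shows "real (min_odd_like_weight n (cyclic_code n G000))
           \<ge> sqrt (real (max (min_odd_like_weight n (cyclic_code n H1))
                             (min_odd_like_weight n (cyclic_code n H2))))"
proof -
  have n12: "n = n1 * n2" and n21: "n = n2 * n1" by (simp_all add: n_def)
  have "0 < n" using \<open>prime n1\<close> \<open>prime n2\<close> prime_gt_0_nat by (simp add: n_def)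
  interpret cyclic_code_roots \<phi> \<theta> n by unfold_locales fact+
  interpret U0_data n1 n2 g1 g2 g \<nu> by unfold_locales fact+
  have U0_range: "U0 \<subseteq> {0<..<n}" unfolding U0_def n12 by (rule U_set_range)
  have U0: "u \<in> U0"
    if "u < n" "[u = g1 ^ a] (mod n1)" "[u = g2 ^ b] (mod n2)" "even (a + b)" for u a b
    using U0_membership that unfolding U0_def n_def d_def e_def by simp
  have zeros: "poly (map_poly \<phi> G000) (\<theta> ^ k) = 0" if "k \<in> defining_set U0 n1 n2" for k
    using defining_set_zeros[OF finite_subset[OF U0_range] that] \<open>map_poly \<phi> G000 = _\<close> by simp
  have "poly (map_poly \<phi> G000) 1 \<noteq> 0"
    using generator_nonzero_at_1[OF n12 U0_range] \<open>map_poly \<phi> G000 = _\<close> by simp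
  hence "poly G000 1 \<noteq> 0" using poly_embed_poly[of G000 1] by (auto simp: embed_one)
  then obtain c where c: "c \<in> cyclic_code n G000" "odd_like n c"
      "hamming_weight c = min_odd_like_weight n (cyclic_code n G000)"
    using min_odd_like_weight_attained \<open>0 < n\<close> by blast
  \<comment> \<open>the code of \<open>H1\<close>: multiplier \<open>\<mu>\<close>, a primitive root modulo \<open>n2\<close> and \<open>1\<close> modulo \<open>n1\<close>\<close>
  obtain \<mu> where \<mu>: "[\<mu> = g2] (mod n2)" "[\<mu> = 1] (mod n1)"
    using binary_chinese_remainder_nat[of n2 n1] prime1 prime2 n1_neq_n2 by (metis primes_coprime)
  have U0': "u \<in> U0"
    if "u < n" "[u = g2 ^ a] (mod n2)" "[u = g1 ^ b] (mod n1)" "even (a + b)" for u a b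
    using U0[of u b a] that by (simp add: add.commute)
  have H1: "min_odd_like_weight n (cyclic_code n H1) \<le> hamming_weight c * hamming_weight c"
    by (rule nonresidue_code_weight_bound[OF n21 prime2 prime1 odd2 primroot2 primroot1 \<mu> U0'
          zeros[folded defining_set_commute[of U0 n2 n1]]
          \<open>map_poly \<phi> H1 = _\<close> c(1,2)])
  \<comment> \<open>the code of \<open>H2\<close>: multiplier \<open>\<nu>\<close>\<close>
  have H2: "min_odd_like_weight n (cyclic_code n H2) \<le> hamming_weight c * hamming_weight c"
    by (rule nonresidue_code_weight_bound[OF n12 prime1 prime2 odd1 primroot1 primroot2
          cong_trans[OF \<nu>1 g1] \<nu>2 U0 zeros \<open>map_poly \<phi> H2 = _\<close> c(1,2)])
  have "real (max (min_odd_like_weight n (cyclic_code n H1))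
                  (min_odd_like_weight n (cyclic_code n H2))) \<le> (real (hamming_weight c))\<^sup>2"
    using H1 H2 by (simp add: power2_eq_square flip: of_nat_mult)
  thus ?thesis using c(3) by (simp add: real_le_lsqrt)
qed

end
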